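(* Let $M$ be an object of an abelian category $\mathcal{A}$. Then: (1) $M$ is strongly self-Rickart if and only if $M$ is self-Rickart and ${\rm End}_{\mathcal{A}}(M)$ is an abelian ring. (2) $M$ is dual strongly self-Rickart if and only if $M$ is dual self-Rickart and ${\rm End}_{\mathcal{A}}(M)$ is an abelian ring.
   Context: A ring is abelian if every idempotent element is central. A morphism $f:X\to Y$ is a section if $f'f=1_X$ for some $f'$, a retraction if $ff'=1_Y$ for some $f'$. A monomorphism $k:K\to M$ is fully invariant if for every $h:M\to M$ there is $\alpha:K\to K$ with $hk=k\alpha$; an epimorphism $c:M\to C$ is fully coinvariant if for every $h:M\to M$ there is $\gamma:C\to C$ with $ch=\gamma c$. $M$ is self-Rickart if the kernel of every endomorphism of $M$ is a section; dual self-Rickart if the cokernel of every endomorphism of $M$ is a retraction; strongly self-Rickart if the kernel of every endomorphism of $M$ is a fully invariant section; dual strongly self-Rickart if the cokernel of every endomorphism of $M$ is a fully coinvariant retraction. *)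

theory Defs
  imports "HOL-Algebra.Ring"
begin

text \<open>A (small-or-large, carrier-based) category with an additive structure on hom-sets.
  cat_comp g f is the composite g after f.\<close>

record ('o, 'm) cat =
  cat_obj  :: "'o set"
  cat_arr  :: "'m set"
  cat_dom  :: "'m \<Rightarrow> 'o"
  cat_cod  :: "'m \<Rightarrow> 'o"
  cat_id   :: "'o \<Rightarrow> 'm"
  cat_comp :: "'m \<Rightarrow> 'm \<Rightarrow> 'm"
  cat_add  :: "'m \<Rightarrow> 'm \<Rightarrow> 'm"
  cat_neg  :: "'m \<Rightarrow> 'm"
  cat_zero :: "'o \<Rightarrow> 'o \<Rightarrow> 'm"

definition hom :: "('o, 'm) cat \<Rightarrow> 'o \<Rightarrow> 'o \<Rightarrow> 'm set" where
  "hom C a b = {f \<in> cat_arr C. cat_dom C f = a \<and> cat_cod C f = b}"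

definition category :: "('o, 'm) cat \<Rightarrow> bool" where
  "category C \<longleftrightarrow>
     (\<forall>f \<in> cat_arr C. cat_dom C f \<in> cat_obj C \<and> cat_cod C f \<in> cat_obj C) \<and>
     (\<forall>a \<in> cat_obj C. cat_id C a \<in> hom C a a) \<and>
     (\<forall>a b c f g. f \<in> hom C a b \<longrightarrow> g \<in> hom C b c \<longrightarrow> cat_comp C g f \<in> hom C a c) \<and>
     (\<forall>a b c d f g h. f \<in> hom C a b \<longrightarrow> g \<in> hom C b c \<longrightarrow> h \<in> hom C c d \<longrightarrow>
        cat_comp C h (cat_comp C g f) = cat_comp C (cat_comp C h g) f) \<and>
     (\<forall>a b f. f \<in> hom C a b \<longrightarrow> cat_comp C f (cat_id C a) = f \<and> cat_comp C (cat_id C b) f = f)"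

definition preadditive :: "('o, 'm) cat \<Rightarrow> bool" where
  "preadditive C \<longleftrightarrow> category C \<and>
     (\<forall>a \<in> cat_obj C. \<forall>b \<in> cat_obj C.
        cat_zero C a b \<in> hom C a b \<and>
        (\<forall>f \<in> hom C a b. \<forall>g \<in> hom C a b. cat_add C f g \<in> hom C a b) \<and>
        (\<forall>f \<in> hom C a b. cat_neg C f \<in> hom C a b) \<and>
        (\<forall>f \<in> hom C a b. \<forall>g \<in> hom C a b. \<forall>h \<in> hom C a b.
            cat_add C (cat_add C f g) h = cat_add C f (cat_add C g h)) \<and>
        (\<forall>f \<in> hom C a b. \<forall>g \<in> hom C a b. cat_add C f g = cat_add C g f) \<and>
        (\<forall>f \<in> hom C a b. cat_add C f (cat_zero C a b) = f) \<and>
        (\<forall>f \<in> hom C a b. cat_add C f (cat_neg C f) = cat_zero C a b)) \<and>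
     (\<forall>a b c f g h. f \<in> hom C a b \<longrightarrow> g \<in> hom C a b \<longrightarrow> h \<in> hom C b c \<longrightarrow>
        cat_comp C h (cat_add C f g) = cat_add C (cat_comp C h f) (cat_comp C h g)) \<and>
     (\<forall>a b c f g h. f \<in> hom C b c \<longrightarrow> g \<in> hom C b c \<longrightarrow> h \<in> hom C a b \<longrightarrow>
        cat_comp C (cat_add C f g) h = cat_add C (cat_comp C f h) (cat_comp C g h))"

definition zero_object :: "('o, 'm) cat \<Rightarrow> 'o \<Rightarrow> bool" where
  "zero_object C z \<longleftrightarrow> z \<in> cat_obj C \<and>
     (\<forall>a \<in> cat_obj C. (\<exists>!f. f \<in> hom C z a) \<and> (\<exists>!f. f \<in> hom C a z))"

definition has_biproducts :: "('o, 'm) cat \<Rightarrow> bool" where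
  "has_biproducts C \<longleftrightarrow>
     (\<forall>a \<in> cat_obj C. \<forall>b \<in> cat_obj C. \<exists>s p1 p2 i1 i2.
        s \<in> cat_obj C \<and> p1 \<in> hom C s a \<and> p2 \<in> hom C s b \<and> i1 \<in> hom C a s \<and> i2 \<in> hom C b s \<and>
        cat_comp C p1 i1 = cat_id C a \<and> cat_comp C p2 i2 = cat_id C b \<and>
        cat_comp C p1 i2 = cat_zero C b a \<and> cat_comp C p2 i1 = cat_zero C a b \<and>
        cat_add C (cat_comp C i1 p1) (cat_comp C i2 p2) = cat_id C s)"

definition additive_category :: "('o, 'm) cat \<Rightarrow> bool" where
  "additive_category C \<longleftrightarrow> preadditive C \<and> (\<exists>z. zero_object C z) \<and> has_biproducts C"

definition mono :: "('o, 'm) cat \<Rightarrow> 'm \<Rightarrow> bool" where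
  "mono C f \<longleftrightarrow> f \<in> cat_arr C \<and>
     (\<forall>x g h. g \<in> hom C x (cat_dom C f) \<longrightarrow> h \<in> hom C x (cat_dom C f) \<longrightarrow>
        cat_comp C f g = cat_comp C f h \<longrightarrow> g = h)"

definition epi :: "('o, 'm) cat \<Rightarrow> 'm \<Rightarrow> bool" where
  "epi C f \<longleftrightarrow> f \<in> cat_arr C \<and>
     (\<forall>x g h. g \<in> hom C (cat_cod C f) x \<longrightarrow> h \<in> hom C (cat_cod C f) x \<longrightarrow>
        cat_comp C g f = cat_comp C h f \<longrightarrow> g = h)"

definition is_kernel :: "('o, 'm) cat \<Rightarrow> 'm \<Rightarrow> 'm \<Rightarrow> bool" where
  "is_kernel C f k \<longleftrightarrow> f \<in> cat_arr C \<and> k \<in> cat_arr C \<and>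
     cat_cod C k = cat_dom C f \<and>
     cat_comp C f k = cat_zero C (cat_dom C k) (cat_cod C f) \<and>
     (\<forall>x g. g \<in> hom C x (cat_dom C f) \<longrightarrow> cat_comp C f g = cat_zero C x (cat_cod C f) \<longrightarrow>
        (\<exists>!u. u \<in> hom C x (cat_dom C k) \<and> cat_comp C k u = g))"

definition is_cokernel :: "('o, 'm) cat \<Rightarrow> 'm \<Rightarrow> 'm \<Rightarrow> bool" where
  "is_cokernel C f c \<longleftrightarrow> f \<in> cat_arr C \<and> c \<in> cat_arr C \<and>
     cat_dom C c = cat_cod C f \<and>
     cat_comp C c f = cat_zero C (cat_dom C f) (cat_cod C c) \<and>
     (\<forall>x g. g \<in> hom C (cat_cod C f) x \<longrightarrow> cat_comp C g f = cat_zero C (cat_dom C f) x \<longrightarrow>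
        (\<exists>!u. u \<in> hom C (cat_cod C c) x \<and> cat_comp C u c = g))"

definition abelian_category :: "('o, 'm) cat \<Rightarrow> bool" where
  "abelian_category C \<longleftrightarrow> additive_category C \<and>
     (\<forall>f \<in> cat_arr C. \<exists>k. is_kernel C f k) \<and>
     (\<forall>f \<in> cat_arr C. \<exists>c. is_cokernel C f c) \<and>
     (\<forall>m. mono C m \<longrightarrow> (\<exists>f. is_kernel C f m)) \<and>
     (\<forall>e. epi C e \<longrightarrow> (\<exists>f. is_cokernel C f e))"

definition "section" :: "('o, 'm) cat \<Rightarrow> 'm \<Rightarrow> bool" where
  "section C f \<longleftrightarrow> f \<in> cat_arr C \<and>
     (\<exists>f'. f' \<in> hom C (cat_cod C f) (cat_dom C f) \<and> cat_comp C f' f = cat_id C (cat_dom C f))"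

definition retraction :: "('o, 'm) cat \<Rightarrow> 'm \<Rightarrow> bool" where
  "retraction C f \<longleftrightarrow> f \<in> cat_arr C \<and>
     (\<exists>f'. f' \<in> hom C (cat_cod C f) (cat_dom C f) \<and> cat_comp C f f' = cat_id C (cat_cod C f))"

definition fully_invariant :: "('o, 'm) cat \<Rightarrow> 'm \<Rightarrow> bool" where
  "fully_invariant C k \<longleftrightarrow> mono C k \<and>
     (\<forall>h \<in> hom C (cat_cod C k) (cat_cod C k).
        \<exists>\<alpha> \<in> hom C (cat_dom C k) (cat_dom C k). cat_comp C h k = cat_comp C k \<alpha>)"

definition fully_coinvariant :: "('o, 'm) cat \<Rightarrow> 'm \<Rightarrow> bool" where
  "fully_coinvariant C c \<longleftrightarrow> epi C c \<and>
     (\<forall>h \<in> hom C (cat_dom C c) (cat_dom C c).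
        \<exists>\<gamma> \<in> hom C (cat_cod C c) (cat_cod C c). cat_comp C c h = cat_comp C \<gamma> c)"

definition self_rickart :: "('o, 'm) cat \<Rightarrow> 'o \<Rightarrow> bool" where
  "self_rickart C M \<longleftrightarrow>
     (\<forall>h \<in> hom C M M. \<forall>k. is_kernel C h k \<longrightarrow> section C k)"

definition dual_self_rickart :: "('o, 'm) cat \<Rightarrow> 'o \<Rightarrow> bool" where
  "dual_self_rickart C M \<longleftrightarrow>
     (\<forall>h \<in> hom C M M. \<forall>c. is_cokernel C h c \<longrightarrow> retraction C c)"

definition strongly_self_rickart :: "('o, 'm) cat \<Rightarrow> 'o \<Rightarrow> bool" where
  "strongly_self_rickart C M \<longleftrightarrow>
     (\<forall>h \<in> hom C M M. \<forall>k. is_kernel C h k \<longrightarrow> fully_invariant C k \<and> section C k)"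

definition dual_strongly_self_rickart :: "('o, 'm) cat \<Rightarrow> 'o \<Rightarrow> bool" where
  "dual_strongly_self_rickart C M \<longleftrightarrow>
     (\<forall>h \<in> hom C M M. \<forall>c. is_cokernel C h c \<longrightarrow> fully_coinvariant C c \<and> retraction C c)"

definition End_ring :: "('o, 'm) cat \<Rightarrow> 'o \<Rightarrow> 'm ring" where
  "End_ring C M = \<lparr>carrier = hom C M M, monoid.mult = cat_comp C, one = cat_id C M,
                    zero = cat_zero C M M, add = cat_add C\<rparr>"

definition abelian_ring :: "('a, 'b) ring_scheme \<Rightarrow> bool" where
  "abelian_ring R \<longleftrightarrow>
     (\<forall>e \<in> carrier R. e \<otimes>\<^bsub>R\<^esub> e = e \<longrightarrow> (\<forall>x \<in> carrier R. e \<otimes>\<^bsub>R\<^esub> x = x \<otimes>\<^bsub>R\<^esub> e))"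

end

theory Submission
  imports Defs
begin

text \<open>
  If the kernel k of f is fully invariant, every g with f g = 0 factors through k, and full
  invariance gives f x g = 0 for every x. In a ring with this property idempotents are central:
  (1 - e) e = 0 and e (1 - e) = 0 yield (1 - e) x e = 0 = e x (1 - e), i.e. x e = e x e = e x.
  Conversely, if k is a section with retraction k', then k k' is idempotent, hence central, and
  x k = (k k') x k = k (k' x k) shows that k is fully invariant. Cokernels are treated dually.
\<close>

lemma hom_objs:
  assumes "category C" "f \<in> hom C a b" shows "a \<in> cat_obj C" "b \<in> cat_obj C"
  using assms unfolding category_def hom_def by auto

lemma cat_comp_hom:
  assumes "category C" "f \<in> hom C a b" "g \<in> hom C b c" shows "cat_comp C g f \<in> hom C a c"
  using assms unfolding category_def by blast

lemma cat_comp_assoc: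
  assumes "category C" "f \<in> hom C a b" "g \<in> hom C b c" "h \<in> hom C c d"
  shows "cat_comp C h (cat_comp C g f) = cat_comp C (cat_comp C h g) f"
  using assms unfolding category_def by blast

lemma cat_id_hom:
  assumes "category C" "a \<in> cat_obj C" shows "cat_id C a \<in> hom C a a"
  using assms unfolding category_def by blast

lemma cat_id_left:
  assumes "category C" "f \<in> hom C a b" shows "cat_comp C (cat_id C b) f = f"
  using assms unfolding category_def by blast

lemma cat_id_right:
  assumes "category C" "f \<in> hom C a b" shows "cat_comp C f (cat_id C a) = f"
  using assms unfolding category_def by blast

lemma homD: "f \<in> hom C a b \<Longrightarrow> f \<in> cat_arr C \<and> cat_dom C f = a \<and> cat_cod C f = b"
  unfolding hom_def by auto

lemma preadditive_category: "preadditive C \<Longrightarrow> category C"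
  unfolding preadditive_def by auto

lemma abelian_category_preadditive: "abelian_category C \<Longrightarrow> preadditive C"
  unfolding abelian_category_def additive_category_def by auto

lemma abelian_category_kernel_exists:
  assumes "abelian_category C" "f \<in> cat_arr C" shows "\<exists>k. is_kernel C f k"
proof -
  have "\<forall>f \<in> cat_arr C. \<exists>k. is_kernel C f k"
    using assms(1) unfolding abelian_category_def by (elim conjE)
  then show ?thesis using assms(2) by blast
qed

lemma abelian_category_cokernel_exists:
  assumes "abelian_category C" "f \<in> cat_arr C" shows "\<exists>c. is_cokernel C f c"
proof -
  have "\<forall>f \<in> cat_arr C. \<exists>c. is_cokernel C f c"
    using assms(1) unfolding abelian_category_def by (elim conjE)
  then show ?thesis using assms(2) by blast
qed

lemma section_mono:
  assumes "category C" "section C k" shows "mono C k"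
  unfolding mono_def
proof (intro conjI allI impI)
  show "k \<in> cat_arr C" using assms(2) unfolding section_def by blast
  then have k: "k \<in> hom C (cat_dom C k) (cat_cod C k)" unfolding hom_def by blast
  obtain k' where k': "k' \<in> hom C (cat_cod C k) (cat_dom C k)"
    and inv: "cat_comp C k' k = cat_id C (cat_dom C k)"
    using assms(2) unfolding section_def by blast
  fix x g h assume g: "g \<in> hom C x (cat_dom C k)" and h: "h \<in> hom C x (cat_dom C k)"
    and eq: "cat_comp C k g = cat_comp C k h"
  have "g = cat_comp C k' (cat_comp C k g)"
    using cat_comp_assoc[OF assms(1) g k k'] inv cat_id_left[OF assms(1) g] by simp
  also have "\<dots> = h"
    using eq cat_comp_assoc[OF assms(1) h k k'] inv cat_id_left[OF assms(1) h] by simp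
  finally show "g = h" .
qed

lemma retraction_epi:
  assumes "category C" "retraction C c" shows "epi C c"
  unfolding epi_def
proof (intro conjI allI impI)
  show "c \<in> cat_arr C" using assms(2) unfolding retraction_def by blast
  then have c: "c \<in> hom C (cat_dom C c) (cat_cod C c)" unfolding hom_def by blast
  obtain c' where c': "c' \<in> hom C (cat_cod C c) (cat_dom C c)"
    and inv: "cat_comp C c c' = cat_id C (cat_cod C c)"
    using assms(2) unfolding retraction_def by blast
  fix x g h assume g: "g \<in> hom C (cat_cod C c) x" and h: "h \<in> hom C (cat_cod C c) x"
    and eq: "cat_comp C g c = cat_comp C h c"
  have "g = cat_comp C (cat_comp C g c) c'"
    using cat_comp_assoc[OF assms(1) c' c g] inv cat_id_right[OF assms(1) g] by simp
  also have "\<dots> = h"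
    using eq cat_comp_assoc[OF assms(1) c' c h] inv cat_id_right[OF assms(1) h] by simp
  finally show "g = h" .
qed

lemma preadditive_homD:
  assumes "preadditive C" "a \<in> cat_obj C" "b \<in> cat_obj C"
  shows "cat_zero C a b \<in> hom C a b \<and>
        (\<forall>f \<in> hom C a b. \<forall>g \<in> hom C a b. cat_add C f g \<in> hom C a b) \<and>
        (\<forall>f \<in> hom C a b. cat_neg C f \<in> hom C a b) \<and>
        (\<forall>f \<in> hom C a b. \<forall>g \<in> hom C a b. \<forall>h \<in> hom C a b.
            cat_add C (cat_add C f g) h = cat_add C f (cat_add C g h)) \<and>
        (\<forall>f \<in> hom C a b. \<forall>g \<in> hom C a b. cat_add C f g = cat_add C g f) \<and>
        (\<forall>f \<in> hom C a b. cat_add C f (cat_zero C a b) = f) \<and>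
        (\<forall>f \<in> hom C a b. cat_add C f (cat_neg C f) = cat_zero C a b)"
proof -
  have "\<forall>a \<in> cat_obj C. \<forall>b \<in> cat_obj C.
        cat_zero C a b \<in> hom C a b \<and>
        (\<forall>f \<in> hom C a b. \<forall>g \<in> hom C a b. cat_add C f g \<in> hom C a b) \<and>
        (\<forall>f \<in> hom C a b. cat_neg C f \<in> hom C a b) \<and>
        (\<forall>f \<in> hom C a b. \<forall>g \<in> hom C a b. \<forall>h \<in> hom C a b.
            cat_add C (cat_add C f g) h = cat_add C f (cat_add C g h)) \<and>
        (\<forall>f \<in> hom C a b. \<forall>g \<in> hom C a b. cat_add C f g = cat_add C g f) \<and>
        (\<forall>f \<in> hom C a b. cat_add C f (cat_zero C a b) = f) \<and>
        (\<forall>f \<in> hom C a b. cat_add C f (cat_neg C f) = cat_zero C a b)"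
    using assms(1) unfolding preadditive_def by (elim conjE)
  then show ?thesis using assms(2,3) by blast
qed

lemma cat_comp_add_left:
  assumes "preadditive C" "f \<in> hom C a b" "g \<in> hom C a b" "h \<in> hom C b c"
  shows "cat_comp C h (cat_add C f g) = cat_add C (cat_comp C h f) (cat_comp C h g)"
proof -
  have "\<forall>a b c f g h. f \<in> hom C a b \<longrightarrow> g \<in> hom C a b \<longrightarrow> h \<in> hom C b c \<longrightarrow>
        cat_comp C h (cat_add C f g) = cat_add C (cat_comp C h f) (cat_comp C h g)"
    using assms(1) unfolding preadditive_def by (elim conjE)
  then show ?thesis using assms(2-4) by blast
qed

lemma cat_comp_add_right:
  assumes "preadditive C" "f \<in> hom C b c" "g \<in> hom C b c" "h \<in> hom C a b"
  shows "cat_comp C (cat_add C f g) h = cat_add C (cat_comp C f h) (cat_comp C g h)"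
proof -
  have "\<forall>a b c f g h. f \<in> hom C b c \<longrightarrow> g \<in> hom C b c \<longrightarrow> h \<in> hom C a b \<longrightarrow>
        cat_comp C (cat_add C f g) h = cat_add C (cat_comp C f h) (cat_comp C g h)"
    using assms(1) unfolding preadditive_def by (elim conjE)
  then show ?thesis using assms(2-4) by blast
qed

lemma preadditive_add_idem_zero:
  assumes P: "preadditive C" and ab: "a \<in> cat_obj C" "b \<in> cat_obj C"
    and w: "w \<in> hom C a b" and ww: "cat_add C w w = w"
  shows "w = cat_zero C a b"
proof -
  have neg: "cat_neg C w \<in> hom C a b" and inv: "cat_add C w (cat_neg C w) = cat_zero C a b"
    and assoc: "cat_add C (cat_add C w w) (cat_neg C w) = cat_add C w (cat_add C w (cat_neg C w))"
    using preadditive_homD[OF P ab] w by blast+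
  have "cat_zero C a b = cat_add C (cat_add C w w) (cat_neg C w)" using ww inv by simp
  also have "\<dots> = w" using assoc inv w preadditive_homD[OF P ab] by simp
  finally show ?thesis by simp
qed

lemma zero_comp:
  assumes P: "preadditive C" and f: "f \<in> hom C a b" and c: "c \<in> cat_obj C"
  shows "cat_comp C (cat_zero C b c) f = cat_zero C a c"
proof (rule preadditive_add_idem_zero[OF P _ c])
  have cat: "category C" using P by (rule preadditive_category)
  show "a \<in> cat_obj C" using hom_objs[OF cat f] by simp
  have b: "b \<in> cat_obj C" using hom_objs[OF cat f] by simp
  have z: "cat_zero C b c \<in> hom C b c" "cat_add C (cat_zero C b c) (cat_zero C b c) = cat_zero C b c"
    using preadditive_homD[OF P b c] by blast+
  show "cat_comp C (cat_zero C b c) f \<in> hom C a c" using cat_comp_hom[OF cat f z(1)] .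
  show "cat_add C (cat_comp C (cat_zero C b c) f) (cat_comp C (cat_zero C b c) f)
      = cat_comp C (cat_zero C b c) f"
    using cat_comp_add_right[OF P z(1) z(1) f] z(2) by simp
qed

lemma comp_zero:
  assumes P: "preadditive C" and f: "f \<in> hom C b c" and a: "a \<in> cat_obj C"
  shows "cat_comp C f (cat_zero C a b) = cat_zero C a c"
proof (rule preadditive_add_idem_zero[OF P a])
  have cat: "category C" using P by (rule preadditive_category)
  show "c \<in> cat_obj C" using hom_objs[OF cat f] by simp
  have b: "b \<in> cat_obj C" using hom_objs[OF cat f] by simp
  have z: "cat_zero C a b \<in> hom C a b" "cat_add C (cat_zero C a b) (cat_zero C a b) = cat_zero C a b"
    using preadditive_homD[OF P a b] by blast+
  show "cat_comp C f (cat_zero C a b) \<in> hom C a c" using cat_comp_hom[OF cat z(1) f] .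
  show "cat_add C (cat_comp C f (cat_zero C a b)) (cat_comp C f (cat_zero C a b))
      = cat_comp C f (cat_zero C a b)"
    using cat_comp_add_left[OF P z(1) z(1) f] z(2) by simp
qed

lemma End_ring_ring:
  assumes P: "preadditive C" and M: "M \<in> cat_obj C"
  shows "ring (End_ring C M)"
proof (rule ringI)
  have cat: "category C" using P by (rule preadditive_category)
  have ax: "cat_zero C M M \<in> hom C M M"
    "\<forall>f \<in> hom C M M. \<forall>g \<in> hom C M M. cat_add C f g \<in> hom C M M"
    "\<forall>f \<in> hom C M M. cat_neg C f \<in> hom C M M"
    "\<forall>f \<in> hom C M M. \<forall>g \<in> hom C M M. \<forall>h \<in> hom C M M.
       cat_add C (cat_add C f g) h = cat_add C f (cat_add C g h)"
    "\<forall>f \<in> hom C M M. \<forall>g \<in> hom C M M. cat_add C f g = cat_add C g f"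
    "\<forall>f \<in> hom C M M. cat_add C f (cat_zero C M M) = f"
    "\<forall>f \<in> hom C M M. cat_add C f (cat_neg C f) = cat_zero C M M"
    using preadditive_homD[OF P M M] by blast+
  show "abelian_group (End_ring C M)"
  proof (rule abelian_groupI)
    fix f assume "f \<in> carrier (End_ring C M)"
    then show "\<exists>g \<in> carrier (End_ring C M). g \<oplus>\<^bsub>End_ring C M\<^esub> f = \<zero>\<^bsub>End_ring C M\<^esub>"
      using ax by (metis End_ring_def partial_object.select_convs(1) ring.select_convs(1,2))
  qed (use ax in \<open>simp_all add: End_ring_def\<close>)
  show "monoid (End_ring C M)"
    by (rule monoidI) (use cat M in \<open>auto simp: End_ring_def intro: cat_comp_hom cat_id_hom
        cat_id_left cat_id_right cat_comp_assoc[symmetric]\<close>)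
qed (auto simp: End_ring_def intro: cat_comp_add_left[OF P] cat_comp_add_right[OF P])

lemma (in ring) eq_if_minus_eq_zero:
  assumes "a \<in> carrier R" "b \<in> carrier R" "a \<ominus> b = \<zero>" shows "a = b"
proof -
  have "a = (a \<ominus> b) \<oplus> b" using assms(1,2) by (simp add: minus_eq a_assoc l_neg)
  then show ?thesis using assms by simp
qed

lemma (in ring) abelian_ringI:
  assumes absorb: "\<And>f g x. f \<in> carrier R \<Longrightarrow> g \<in> carrier R \<Longrightarrow> x \<in> carrier R \<Longrightarrow>
                 f \<otimes> g = \<zero> \<Longrightarrow> f \<otimes> (x \<otimes> g) = \<zero>"
  shows "abelian_ring R"
  unfolding abelian_ring_def
proof (intro ballI impI)
  fix e x assume e: "e \<in> carrier R" and ee: "e \<otimes> e = e" and x: "x \<in> carrier R"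
  have "(\<one> \<ominus> e) \<otimes> e = \<zero>" using e ee by (simp add: minus_eq l_distr l_minus r_neg)
  then have "(\<one> \<ominus> e) \<otimes> (x \<otimes> e) = \<zero>" using absorb e x by simp
  then have "x \<otimes> e \<ominus> e \<otimes> x \<otimes> e = \<zero>" using e x by (simp add: minus_eq l_distr l_minus m_assoc)
  then have xe: "x \<otimes> e = e \<otimes> x \<otimes> e" using e x by (simp add: eq_if_minus_eq_zero)
  have "e \<otimes> (\<one> \<ominus> e) = \<zero>" using e ee by (simp add: minus_eq r_distr r_minus r_neg)
  then have "e \<otimes> (x \<otimes> (\<one> \<ominus> e)) = \<zero>" using absorb e x by simp
  then have "e \<otimes> x \<ominus> e \<otimes> x \<otimes> e = \<zero>" using e x by (simp add: minus_eq r_distr r_minus m_assoc)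
  then have ex: "e \<otimes> x = e \<otimes> x \<otimes> e" using e x by (simp add: eq_if_minus_eq_zero)
  show "e \<otimes> x = x \<otimes> e" using ex xe by (rule trans[OF _ sym])
qed

lemma abelian_End_ringD:
  assumes "abelian_ring (End_ring C M)" "e \<in> hom C M M" "cat_comp C e e = e" "x \<in> hom C M M"
  shows "cat_comp C e x = cat_comp C x e"
  using assms unfolding abelian_ring_def End_ring_def by auto

lemma kernel_in_hom:
  "is_kernel C f k \<Longrightarrow> k \<in> hom C (cat_dom C k) (cat_dom C f)"
  unfolding is_kernel_def hom_def by auto

lemma cokernel_in_hom:
  "is_cokernel C f c \<Longrightarrow> c \<in> hom C (cat_cod C f) (cat_cod C c)"
  unfolding is_cokernel_def hom_def by auto

lemma fully_invariant_kernel_absorbs: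
  assumes P: "preadditive C" and k: "is_kernel C f k" and inv: "fully_invariant C k"
    and f: "f \<in> hom C M N" and g: "g \<in> hom C L M" and x: "x \<in> hom C M M"
    and fg: "cat_comp C f g = cat_zero C L N"
  shows "cat_comp C f (cat_comp C x g) = cat_zero C L N"
proof -
  have cat: "category C" using P by (rule preadditive_category)
  define K where "K = cat_dom C k"
  have kh: "k \<in> hom C K M" using kernel_in_hom[OF k] homD[OF f] K_def by simp
  have fk: "cat_comp C f k = cat_zero C K N" using k homD[OF f] unfolding is_kernel_def K_def by auto
  have "\<exists>!u. u \<in> hom C L K \<and> cat_comp C k u = g"
    using k g fg homD[OF f] unfolding is_kernel_def K_def by auto
  then obtain u where u: "u \<in> hom C L K" and ku: "cat_comp C k u = g" by blast
  obtain \<alpha> where \<alpha>: "\<alpha> \<in> hom C K K" and xk: "cat_comp C x k = cat_comp C k \<alpha>"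
    using inv x homD[OF kh] unfolding fully_invariant_def K_def by auto
  have \<alpha>u: "cat_comp C \<alpha> u \<in> hom C L K" using cat_comp_hom[OF cat u \<alpha>] .
  have "cat_comp C x g = cat_comp C k (cat_comp C \<alpha> u)"
    using ku xk cat_comp_assoc[OF cat u kh x] cat_comp_assoc[OF cat u \<alpha> kh] by simp
  then have "cat_comp C f (cat_comp C x g) = cat_comp C (cat_zero C K N) (cat_comp C \<alpha> u)"
    using fk cat_comp_assoc[OF cat \<alpha>u kh f] by simp
  also have "\<dots> = cat_zero C L N" using zero_comp[OF P \<alpha>u hom_objs(2)[OF cat f]] .
  finally show ?thesis .
qed

lemma fully_coinvariant_cokernel_absorbs:
  assumes P: "preadditive C" and c: "is_cokernel C g c" and inv: "fully_coinvariant C c"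
    and f: "f \<in> hom C M N" and g: "g \<in> hom C L M" and x: "x \<in> hom C M M"
    and fg: "cat_comp C f g = cat_zero C L N"
  shows "cat_comp C f (cat_comp C x g) = cat_zero C L N"
proof -
  have cat: "category C" using P by (rule preadditive_category)
  define Q where "Q = cat_cod C c"
  have ch: "c \<in> hom C M Q" using cokernel_in_hom[OF c] homD[OF g] Q_def by simp
  have cg: "cat_comp C c g = cat_zero C L Q" using c homD[OF g] unfolding is_cokernel_def Q_def by auto
  have "\<exists>!u. u \<in> hom C Q N \<and> cat_comp C u c = f"
    using c f fg homD[OF g] unfolding is_cokernel_def Q_def by auto
  then obtain u where u: "u \<in> hom C Q N" and uc: "cat_comp C u c = f" by blast
  obtain \<gamma> where \<gamma>: "\<gamma> \<in> hom C Q Q" and cx: "cat_comp C c x = cat_comp C \<gamma> c"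
    using inv x homD[OF ch] unfolding fully_coinvariant_def Q_def by auto
  have u\<gamma>: "cat_comp C u \<gamma> \<in> hom C Q N" using cat_comp_hom[OF cat \<gamma> u] .
  have "cat_comp C f x = cat_comp C (cat_comp C u \<gamma>) c"
    using uc cx cat_comp_assoc[OF cat x ch u] cat_comp_assoc[OF cat ch \<gamma> u] by simp
  then have "cat_comp C f (cat_comp C x g) = cat_comp C (cat_comp C u \<gamma>) (cat_zero C L Q)"
    using cg cat_comp_assoc[OF cat g x f] cat_comp_assoc[OF cat g ch u\<gamma>] by simp
  also have "\<dots> = cat_zero C L N" using comp_zero[OF P u\<gamma> hom_objs(1)[OF cat g]] .
  finally show ?thesis .
qed

lemma fully_invariant_if_central_idempotent:
  assumes cat: "category C" and k: "k \<in> hom C K M" and k': "k' \<in> hom C M K"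
    and inv: "cat_comp C k' k = cat_id C K"
    and central: "\<And>x. x \<in> hom C M M \<Longrightarrow> cat_comp C (cat_comp C k k') x = cat_comp C x (cat_comp C k k')"
  shows "fully_invariant C k"
  unfolding fully_invariant_def
proof (intro conjI ballI)
  show "mono C k"
    using section_mono[OF cat] k k' inv homD[OF k] unfolding section_def by auto
  fix x assume "x \<in> hom C (cat_cod C k) (cat_cod C k)"
  then have x: "x \<in> hom C M M" using homD[OF k] by simp
  have e: "cat_comp C k k' \<in> hom C M M" using cat_comp_hom[OF cat k' k] .
  have xk: "cat_comp C x k \<in> hom C K M" using cat_comp_hom[OF cat k x] .
  have "cat_comp C x k = cat_comp C x (cat_comp C (cat_comp C k k') k)"
    using inv cat_id_right[OF cat k] cat_comp_assoc[OF cat k k' k] by simp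
  also have "\<dots> = cat_comp C (cat_comp C x (cat_comp C k k')) k"
    using cat_comp_assoc[OF cat k e x] .
  also have "\<dots> = cat_comp C (cat_comp C (cat_comp C k k') x) k"
    using central[OF x] by simp
  also have "\<dots> = cat_comp C k (cat_comp C k' (cat_comp C x k))"
    using cat_comp_assoc[OF cat k x e] cat_comp_assoc[OF cat xk k' k] by simp
  finally have "cat_comp C x k = cat_comp C k (cat_comp C k' (cat_comp C x k))" .
  moreover have "cat_comp C k' (cat_comp C x k) \<in> hom C (cat_dom C k) (cat_dom C k)"
    using cat_comp_hom[OF cat xk k'] homD[OF k] by simp
  ultimately show "\<exists>\<alpha> \<in> hom C (cat_dom C k) (cat_dom C k). cat_comp C x k = cat_comp C k \<alpha>"
    by blast
qed

lemma fully_coinvariant_if_central_idempotent: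
  assumes cat: "category C" and c: "c \<in> hom C M Q" and c': "c' \<in> hom C Q M"
    and inv: "cat_comp C c c' = cat_id C Q"
    and central: "\<And>x. x \<in> hom C M M \<Longrightarrow> cat_comp C (cat_comp C c' c) x = cat_comp C x (cat_comp C c' c)"
  shows "fully_coinvariant C c"
  unfolding fully_coinvariant_def
proof (intro conjI ballI)
  show "epi C c"
    using retraction_epi[OF cat] c c' inv homD[OF c] unfolding retraction_def by auto
  fix x assume "x \<in> hom C (cat_dom C c) (cat_dom C c)"
  then have x: "x \<in> hom C M M" using homD[OF c] by simp
  have e: "cat_comp C c' c \<in> hom C M M" using cat_comp_hom[OF cat c c'] .
  have cx: "cat_comp C c x \<in> hom C M Q" using cat_comp_hom[OF cat x c] .
  have "cat_comp C c x = cat_comp C (cat_comp C c (cat_comp C c' c)) x"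
    using inv cat_id_left[OF cat c] cat_comp_assoc[OF cat c c' c] by simp
  also have "\<dots> = cat_comp C c (cat_comp C (cat_comp C c' c) x)"
    using cat_comp_assoc[OF cat x e c] by simp
  also have "\<dots> = cat_comp C c (cat_comp C x (cat_comp C c' c))"
    using central[OF x] by simp
  also have "\<dots> = cat_comp C (cat_comp C (cat_comp C c x) c') c"
    using cat_comp_assoc[OF cat e x c] cat_comp_assoc[OF cat c c' cx] by simp
  finally have "cat_comp C c x = cat_comp C (cat_comp C (cat_comp C c x) c') c" .
  moreover have "cat_comp C (cat_comp C c x) c' \<in> hom C (cat_cod C c) (cat_cod C c)"
    using cat_comp_hom[OF cat c' cx] homD[OF c] by simp
  ultimately show "\<exists>\<gamma> \<in> hom C (cat_cod C c) (cat_cod C c). cat_comp C c x = cat_comp C \<gamma> c"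
    by blast
qed

lemma strongly_self_rickart_abelian_End_ring:
  assumes A: "abelian_category C" and M: "M \<in> cat_obj C" and S: "strongly_self_rickart C M"
  shows "abelian_ring (End_ring C M)"
proof -
  have P: "preadditive C" using A by (rule abelian_category_preadditive)
  interpret R: ring "End_ring C M" using End_ring_ring[OF P M] .
  have "cat_comp C f (cat_comp C x g) = cat_zero C M M"
    if f: "f \<in> hom C M M" and g: "g \<in> hom C M M" and x: "x \<in> hom C M M"
      and fg: "cat_comp C f g = cat_zero C M M" for f g x
  proof -
    obtain k where k: "is_kernel C f k" using abelian_category_kernel_exists[OF A] homD[OF f] by blast
    then have "fully_invariant C k" using S f unfolding strongly_self_rickart_def by blast
    then show ?thesis using fully_invariant_kernel_absorbs[OF P k _ f g x fg] by simp
  qed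
  then show ?thesis by (intro R.abelian_ringI) (simp add: End_ring_def)
qed

lemma dual_strongly_self_rickart_abelian_End_ring:
  assumes A: "abelian_category C" and M: "M \<in> cat_obj C" and S: "dual_strongly_self_rickart C M"
  shows "abelian_ring (End_ring C M)"
proof -
  have P: "preadditive C" using A by (rule abelian_category_preadditive)
  interpret R: ring "End_ring C M" using End_ring_ring[OF P M] .
  have "cat_comp C f (cat_comp C x g) = cat_zero C M M"
    if f: "f \<in> hom C M M" and g: "g \<in> hom C M M" and x: "x \<in> hom C M M"
      and fg: "cat_comp C f g = cat_zero C M M" for f g x
  proof -
    obtain c where c: "is_cokernel C g c" using abelian_category_cokernel_exists[OF A] homD[OF g] by blast
    then have "fully_coinvariant C c" using S g unfolding dual_strongly_self_rickart_def by blast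
    then show ?thesis using fully_coinvariant_cokernel_absorbs[OF P c _ f g x fg] by simp
  qed
  then show ?thesis by (intro R.abelian_ringI) (simp add: End_ring_def)
qed

lemma strongly_self_rickart_if_abelian_End_ring:
  assumes P: "preadditive C" and S: "self_rickart C M" and Ab: "abelian_ring (End_ring C M)"
  shows "strongly_self_rickart C M"
  unfolding strongly_self_rickart_def
proof (intro ballI allI impI conjI)
  have cat: "category C" using P by (rule preadditive_category)
  fix h k assume h: "h \<in> hom C M M" and k: "is_kernel C h k"
  show sec: "section C k" using S h k unfolding self_rickart_def by blast
  define K where "K = cat_dom C k"
  have kh: "k \<in> hom C K M" using kernel_in_hom[OF k] homD[OF h] K_def by simp
  obtain k' where k': "k' \<in> hom C M K" and inv: "cat_comp C k' k = cat_id C K"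
    using sec homD[OF kh] unfolding section_def by auto
  have e: "cat_comp C k k' \<in> hom C M M" using cat_comp_hom[OF cat k' kh] .
  have "cat_comp C (cat_comp C k k') (cat_comp C k k') = cat_comp C k (cat_comp C (cat_comp C k' k) k')"
    using cat_comp_assoc[OF cat k' kh k'] cat_comp_assoc[OF cat e k' kh] by simp
  then have "cat_comp C (cat_comp C k k') (cat_comp C k k') = cat_comp C k k'"
    using inv cat_id_left[OF cat k'] by simp
  then show "fully_invariant C k"
    using fully_invariant_if_central_idempotent[OF cat kh k' inv] abelian_End_ringD[OF Ab e] by blast
qed

lemma dual_strongly_self_rickart_if_abelian_End_ring:
  assumes P: "preadditive C" and S: "dual_self_rickart C M" and Ab: "abelian_ring (End_ring C M)"
  shows "dual_strongly_self_rickart C M"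
  unfolding dual_strongly_self_rickart_def
proof (intro ballI allI impI conjI)
  have cat: "category C" using P by (rule preadditive_category)
  fix h c assume h: "h \<in> hom C M M" and c: "is_cokernel C h c"
  show ret: "retraction C c" using S h c unfolding dual_self_rickart_def by blast
  define Q where "Q = cat_cod C c"
  have ch: "c \<in> hom C M Q" using cokernel_in_hom[OF c] homD[OF h] Q_def by simp
  obtain c' where c': "c' \<in> hom C Q M" and inv: "cat_comp C c c' = cat_id C Q"
    using ret homD[OF ch] unfolding retraction_def by auto
  have e: "cat_comp C c' c \<in> hom C M M" using cat_comp_hom[OF cat ch c'] .
  have "cat_comp C (cat_comp C c' c) (cat_comp C c' c) = cat_comp C c' (cat_comp C (cat_comp C c c') c)"
    using cat_comp_assoc[OF cat ch c' ch] cat_comp_assoc[OF cat e ch c'] by simp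
  then have "cat_comp C (cat_comp C c' c) (cat_comp C c' c) = cat_comp C c' c"
    using inv cat_id_left[OF cat ch] by simp
  then show "fully_coinvariant C c"
    using fully_coinvariant_if_central_idempotent[OF cat ch c' inv] abelian_End_ringD[OF Ab e] by blast
qed

theorem proposition2p14:
  fixes C :: "('o, 'm) cat" and M :: 'o
  assumes "abelian_category C" and "M \<in> cat_obj C"
  shows "(strongly_self_rickart C M \<longleftrightarrow> self_rickart C M \<and> abelian_ring (End_ring C M)) \<and>
         (dual_strongly_self_rickart C M \<longleftrightarrow> dual_self_rickart C M \<and> abelian_ring (End_ring C M))"
proof -
  have P: "preadditive C" using assms(1) by (rule abelian_category_preadditive)
  have "strongly_self_rickart C M \<Longrightarrow> self_rickart C M"
    unfolding strongly_self_rickart_def self_rickart_def by blast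
  moreover have "dual_strongly_self_rickart C M \<Longrightarrow> dual_self_rickart C M"
    unfolding dual_strongly_self_rickart_def dual_self_rickart_def by blast
  ultimately show ?thesis
    using strongly_self_rickart_abelian_End_ring[OF assms]
      dual_strongly_self_rickart_abelian_End_ring[OF assms]
      strongly_self_rickart_if_abelian_End_ring[OF P]
      dual_strongly_self_rickart_if_abelian_End_ring[OF P] by blast
qed

end
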